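(* Let $M$ be a complete non-ambiguous matrix (CNM) of size $n\ge 1$ and let $\pi(M)\in S_n$ be its associated permutation. Then $\det(M)=\operatorname{sgn}(\pi(M))$.
   Context: A complete non-ambiguous matrix (CNM) of size $n$ is an $n\times n$ matrix $M=(m_{i,j})$ with entries in $\{0,1\}$ whose support $T=\{(i,j): m_{i,j}=1\}$ (whose elements are called vertices) satisfies: (1) $(1,1)\in T$ (the root); (2) for every $p=(i,j)\in T$ with $p\neq(1,1)$, exactly one of the following holds: there is $(i',j)\in T$ with $i'<i$, or there is $(i,j')\in T$ with $j'<j$; (3) every row and every column of $M$ contains at least one vertex; (4) completeness: define the parent of $p=(i,j)\neq(1,1)$ to be $(i',j)$ with $i'<i$ maximal if such a vertex exists, and otherwise $(i,j')$ with $j'<j$ maximal; then every vertex is the parent of either zero or exactly two vertices. A vertex with no children is a leaf. (CNMs are exactly the matrix encodings of complete non-ambiguous trees.) Each row and each column of a CNM contains exactly one leaf, so the leaf matrix $p(M)$, obtained from $M$ by replacing all non-leaf vertices by $0$, is a permutation matrix; the associated permutation $\pi(M)\in S_n$ is the permutation with $\pi(M)(i)=j$ iff $(i,j)$ is a leaf. $\operatorname{sgn}$ denotes the sign of a permutation. *)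

theory Defs
  imports "Jordan_Normal_Form.Determinant" "HOL-Combinatorics.Permutations"
begin

text \<open>A CNM of size n is represented by its support T (set of vertices),
  with 1-based indices: T \<subseteq> {1..n} \<times> {1..n}.\<close>

definition cnm_parent :: "(nat \<times> nat) set \<Rightarrow> nat \<times> nat \<Rightarrow> nat \<times> nat" where
  "cnm_parent T p = (case p of (i, j) \<Rightarrow>
     if (\<exists>i'<i. (i', j) \<in> T) then (GREATEST i'. i' < i \<and> (i', j) \<in> T, j)
     else (i, GREATEST j'. j' < j \<and> (i, j') \<in> T))"

definition cnm_children :: "(nat \<times> nat) set \<Rightarrow> nat \<times> nat \<Rightarrow> (nat \<times> nat) set" where
  "cnm_children T p = {q \<in> T. q \<noteq> (1, 1) \<and> cnm_parent T q = p}"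

definition is_cnm :: "nat \<Rightarrow> (nat \<times> nat) set \<Rightarrow> bool" where
  "is_cnm n T \<longleftrightarrow>
     T \<subseteq> {1..n} \<times> {1..n} \<and>
     (1, 1) \<in> T \<and>
     (\<forall>(i, j) \<in> T. (i, j) \<noteq> (1, 1) \<longrightarrow>
        ((\<exists>i'<i. (i', j) \<in> T) \<noteq> (\<exists>j'<j. (i, j') \<in> T))) \<and>
     (\<forall>i \<in> {1..n}. \<exists>j. (i, j) \<in> T) \<and>
     (\<forall>j \<in> {1..n}. \<exists>i. (i, j) \<in> T) \<and>
     (\<forall>p \<in> T. card (cnm_children T p) = 0 \<or> card (cnm_children T p) = 2)"

definition cnm_leaves :: "(nat \<times> nat) set \<Rightarrow> (nat \<times> nat) set" where
  "cnm_leaves T = {p \<in> T. cnm_children T p = {}}"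

definition cnm_perm :: "nat \<Rightarrow> (nat \<times> nat) set \<Rightarrow> nat \<Rightarrow> nat" where
  "cnm_perm n T i = (if i \<in> {1..n} then (THE j. (i, j) \<in> cnm_leaves T) else i)"

text \<open>The matrix M as an n\<times>n integer matrix (Jordan_Normal_Form, 0-based
  indices: entry (i,j) of the JNF matrix is m_{i+1,j+1}).\<close>
definition cnm_matrix :: "nat \<Rightarrow> (nat \<times> nat) set \<Rightarrow> int mat" where
  "cnm_matrix n T = mat n n (\<lambda>(i, j). if (i + 1, j + 1) \<in> T then 1 else 0)"

end

theory Submission imports Defs begin

text \<open>
  Every vertex with a vertex below it in its column, or to its right in its row, has a child,
  so a leaf is the lowest vertex of its column and the rightmost one of its row; conversely,
  since children of a vertex in a common row (column) coincide and a vertex has 0 or 2 children,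
  the lowest vertex of a column and the rightmost vertex of a row are leaves. Hence the leaves
  form a permutation \<pi>, and \<pi> is the only perfect matching contained in \<open>T\<close>: by downward
  induction on the row \<open>i\<close>, a matching \<sigma> agreeing with \<pi> below row \<open>i\<close> must pick in row \<open>i\<close>
  the lowest vertex of its column, which is a leaf. So the Leibniz expansion of \<open>det M\<close> has
  the single nonzero term \<open>sgn \<pi>\<close>.
\<close>

lemma is_cnmD:
  assumes "is_cnm n T"
  shows "T \<subseteq> {1..n} \<times> {1..n}"
    and "\<And>i j. (i, j) \<in> T \<Longrightarrow> (i, j) \<noteq> (1, 1) \<Longrightarrow>
           (\<exists>i'<i. (i', j) \<in> T) \<noteq> (\<exists>j'<j. (i, j') \<in> T)"
    and "\<And>i. i \<in> {1..n} \<Longrightarrow> \<exists>j. (i, j) \<in> T"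
    and "\<And>p. p \<in> T \<Longrightarrow> card (cnm_children T p) = 0 \<or> card (cnm_children T p) = 2"
  using assms unfolding is_cnm_def by blast+

lemma finite_cnm_row: "is_cnm n T \<Longrightarrow> finite {j. (i, j) \<in> T}"
  by (rule finite_subset[of _ "{1..n}"]) (use is_cnmD(1) in auto)

lemma finite_cnm_column: "is_cnm n T \<Longrightarrow> finite {i. (i, j) \<in> T}"
  by (rule finite_subset[of _ "{1..n}"]) (use is_cnmD(1) in auto)

lemma Greatest_less_eq_imp_eq:
  fixes j j' :: nat
  assumes "P j" "P j'" "b < j" "b < j'"
    and "(GREATEST y. y < j \<and> P y) = b" "(GREATEST y. y < j' \<and> P y) = b"
  shows "j = j'"
proof (rule linorder_cases)
  assume "j < j'"
  then have "j \<le> (GREATEST y. y < j' \<and> P y)"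
    using Greatest_le_nat[of "\<lambda>y. y < j' \<and> P y" j j'] assms(1) by auto
  then show ?thesis using assms by simp
next
  assume "j' < j"
  then have "j' \<le> (GREATEST y. y < j \<and> P y)"
    using Greatest_le_nat[of "\<lambda>y. y < j \<and> P y" j' j] assms(2) by auto
  then show ?thesis using assms by simp
qed

lemma Greatest_less_Least_eq:
  fixes a :: nat
  assumes "P a" "P i" "a < i"
  shows "(GREATEST y. y < (LEAST k. a < k \<and> P k) \<and> P y) = a"
proof -
  define k where "k = (LEAST k. a < k \<and> P k)"
  have k: "a < k" "P k" using LeastI[of "\<lambda>k. a < k \<and> P k" i] assms k_def by auto
  have "\<not> P y" if "a < y" "y < k" for y using not_less_Least that k_def by blast
  then have "(GREATEST y. y < k \<and> P y) = a"
    by (intro Greatest_equality) (use assms k in \<open>auto simp: not_less[symmetric]\<close>)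
  then show ?thesis unfolding k_def .
qed

lemma cnm_children_nonempty_below:
  assumes c: "is_cnm n T" and "(a, b) \<in> T" "(i, b) \<in> T" "a < i"
  shows "cnm_children T (a, b) \<noteq> {}"
proof -
  define i0 where "i0 = (LEAST k. a < k \<and> (k, b) \<in> T)"
  have i0: "a < i0" "(i0, b) \<in> T"
    using LeastI[of "\<lambda>k. a < k \<and> (k, b) \<in> T" i] assms i0_def by auto
  have "(GREATEST y. y < i0 \<and> (y, b) \<in> T) = a"
    unfolding i0_def using Greatest_less_Least_eq[of "\<lambda>k. (k, b) \<in> T"] assms by blast
  then have "cnm_parent T (i0, b) = (a, b)"
    unfolding cnm_parent_def using assms i0 by auto
  moreover have "(i0, b) \<noteq> (1, 1)" using i0 assms is_cnmD(1)[OF c] by auto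
  ultimately have "(i0, b) \<in> cnm_children T (a, b)"
    unfolding cnm_children_def using i0 by auto
  then show ?thesis by auto
qed

text \<open>Unlike the column case, the parent of the next vertex to the right lies in the row only
  because that vertex has no vertex above it.\<close>

lemma cnm_children_nonempty_right:
  assumes c: "is_cnm n T" and "(a, b) \<in> T" "(a, j) \<in> T" "b < j"
  shows "cnm_children T (a, b) \<noteq> {}"
proof -
  define j0 where "j0 = (LEAST k. b < k \<and> (a, k) \<in> T)"
  have j0: "b < j0" "(a, j0) \<in> T"
    using LeastI[of "\<lambda>k. b < k \<and> (a, k) \<in> T" j] assms j0_def by auto
  have "(GREATEST y. y < j0 \<and> (a, y) \<in> T) = b"
    unfolding j0_def using Greatest_less_Least_eq[of "\<lambda>k. (a, k) \<in> T"] assms by blast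
  moreover have ne: "(a, j0) \<noteq> (1, 1)" using j0 assms is_cnmD(1)[OF c] by auto
  moreover have "\<not> (\<exists>i'<a. (i', j0) \<in> T)" using is_cnmD(2)[OF c j0(2) ne] j0 assms by auto
  ultimately have "(a, j0) \<in> cnm_children T (a, b)"
    unfolding cnm_children_def cnm_parent_def using j0 by auto
  then show ?thesis by auto
qed

lemma cnm_child_cases:
  assumes c: "is_cnm n T" and q: "(i, j) \<in> cnm_children T (a, b)"
  shows "(j = b \<and> a < i \<and> (GREATEST y. y < i \<and> (y, j) \<in> T) = a)
       \<or> (i = a \<and> b < j \<and> (GREATEST y. y < j \<and> (i, y) \<in> T) = b)"
proof -
  have qT: "(i, j) \<in> T" and ne: "(i, j) \<noteq> (1, 1)" and par: "cnm_parent T (i, j) = (a, b)"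
    using q unfolding cnm_children_def by auto
  show ?thesis
  proof (cases "\<exists>i'<i. (i', j) \<in> T")
    case True
    then obtain k where "k < i" "(k, j) \<in> T" by auto
    then have "(GREATEST y. y < i \<and> (y, j) \<in> T) < i"
      using GreatestI_nat[of "\<lambda>y. y < i \<and> (y, j) \<in> T" k i] by auto
    then show ?thesis using par True unfolding cnm_parent_def by auto
  next
    case False
    then obtain k where "k < j" "(i, k) \<in> T" using is_cnmD(2)[OF c qT ne] by auto
    then have "(GREATEST y. y < j \<and> (i, y) \<in> T) < j"
      using GreatestI_nat[of "\<lambda>y. y < j \<and> (i, y) \<in> T" k j] by auto
    then show ?thesis using par False unfolding cnm_parent_def by auto
  qed
qed

lemma cnm_children_empty_if_subsingleton:
  assumes "is_cnm n T" "p \<in> T" "\<And>q q'. q \<in> cnm_children T p \<Longrightarrow> q' \<in> cnm_children T p \<Longrightarrow> q = q'"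
  shows "cnm_children T p = {}"
proof -
  have fin: "finite (cnm_children T p)"
    by (rule finite_subset[of _ "{1..n} \<times> {1..n}"])
       (use is_cnmD(1)[OF assms(1)] in \<open>auto simp: cnm_children_def\<close>)
  then have "card (cnm_children T p) \<le> 1"
    by (subst card_le_Suc0_iff_eq[OF fin, unfolded One_nat_def[symmetric]]) (use assms(3) in blast)
  then have "card (cnm_children T p) = 0" using is_cnmD(4)[OF assms(1,2)] by auto
  with fin show ?thesis by simp
qed

lemma cnm_lowest_in_column_is_leaf:
  assumes c: "is_cnm n T" and ab: "(a, b) \<in> T" and lowest: "\<And>i. (i, b) \<in> T \<Longrightarrow> i \<le> a"
  shows "(a, b) \<in> cnm_leaves T"
proof -
  have row: "i = a \<and> b < j \<and> (GREATEST y. y < j \<and> (a, y) \<in> T) = b \<and> (a, j) \<in> T"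
    if "(i, j) \<in> cnm_children T (a, b)" for i j
    using cnm_child_cases[OF c that] lowest that unfolding cnm_children_def by fastforce
  have "q = q'" if "q \<in> cnm_children T (a, b)" "q' \<in> cnm_children T (a, b)" for q q'
    using that row[of "fst q" "snd q"] row[of "fst q'" "snd q'"]
      Greatest_less_eq_imp_eq[of "\<lambda>y. (a, y) \<in> T" "snd q" "snd q'" b]
    by (cases q, cases q') auto
  then show ?thesis
    using cnm_children_empty_if_subsingleton[OF c ab] ab unfolding cnm_leaves_def by blast
qed

lemma cnm_rightmost_in_row_is_leaf:
  assumes c: "is_cnm n T" and ab: "(a, b) \<in> T" and rightmost: "\<And>j. (a, j) \<in> T \<Longrightarrow> j \<le> b"
  shows "(a, b) \<in> cnm_leaves T"
proof -
  have column: "j = b \<and> a < i \<and> (GREATEST y. y < i \<and> (y, b) \<in> T) = a \<and> (i, b) \<in> T"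
    if "(i, j) \<in> cnm_children T (a, b)" for i j
    using cnm_child_cases[OF c that] rightmost that unfolding cnm_children_def by fastforce
  have "q = q'" if "q \<in> cnm_children T (a, b)" "q' \<in> cnm_children T (a, b)" for q q'
    using that column[of "fst q" "snd q"] column[of "fst q'" "snd q'"]
      Greatest_less_eq_imp_eq[of "\<lambda>y. (y, b) \<in> T" "fst q" "fst q'" a]
    by (cases q, cases q') auto
  then show ?thesis
    using cnm_children_empty_if_subsingleton[OF c ab] ab unfolding cnm_leaves_def by blast
qed

lemma cnm_leaf_lowest_in_column:
  "is_cnm n T \<Longrightarrow> (a, b) \<in> cnm_leaves T \<Longrightarrow> (i, b) \<in> T \<Longrightarrow> i \<le> a"
  using cnm_children_nonempty_below unfolding cnm_leaves_def by force

lemma cnm_leaf_rightmost_in_row: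
  "is_cnm n T \<Longrightarrow> (a, b) \<in> cnm_leaves T \<Longrightarrow> (a, j) \<in> T \<Longrightarrow> j \<le> b"
  using cnm_children_nonempty_right unfolding cnm_leaves_def by force

lemma cnm_row_has_unique_leaf:
  assumes c: "is_cnm n T" and i: "i \<in> {1..n}"
  shows "\<exists>!j. (i, j) \<in> cnm_leaves T"
proof -
  define R where "R = {j. (i, j) \<in> T}"
  have "finite R" "R \<noteq> {}" using finite_cnm_row[OF c] is_cnmD(3)[OF c i] R_def by auto
  then have "Max R \<in> R" and rightmost: "\<And>j. j \<in> R \<Longrightarrow> j \<le> Max R" by auto
  then have leaf: "(i, Max R) \<in> cnm_leaves T"
    by (intro cnm_rightmost_in_row_is_leaf[OF c]) (auto simp: R_def)
  have "j = Max R" if "(i, j) \<in> cnm_leaves T" for j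
  proof (rule antisym)
    show "j \<le> Max R" using that rightmost unfolding R_def cnm_leaves_def by simp
    show "Max R \<le> j" using cnm_leaf_rightmost_in_row[OF c that] \<open>Max R \<in> R\<close> R_def by simp
  qed
  with leaf show ?thesis by blast
qed

lemma cnm_perm_leaf:
  assumes "is_cnm n T" "i \<in> {1..n}"
  shows "(i, cnm_perm n T i) \<in> cnm_leaves T"
proof -
  have "cnm_perm n T i = (THE j. (i, j) \<in> cnm_leaves T)" using assms(2) by (simp add: cnm_perm_def)
  then show ?thesis using theI'[OF cnm_row_has_unique_leaf[OF assms]] by simp
qed

lemma cnm_perm_eqI:
  assumes c: "is_cnm n T" and l: "(i, j) \<in> cnm_leaves T"
  shows "cnm_perm n T i = j"
proof -
  have i: "i \<in> {1..n}" using l is_cnmD(1)[OF c] unfolding cnm_leaves_def by auto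
  show ?thesis
    unfolding cnm_perm_def using i the1_equality[OF cnm_row_has_unique_leaf[OF c i] l] by simp
qed

lemma cnm_perm_permutes:
  assumes c: "is_cnm n T"
  shows "cnm_perm n T permutes {1..n}"
proof (rule inj_imp_permutes)
  show "inj_on (cnm_perm n T) {1..n}"
  proof (rule inj_onI)
    fix x y assume x: "x \<in> {1..n}" and y: "y \<in> {1..n}" and eq: "cnm_perm n T x = cnm_perm n T y"
    have lx: "(x, cnm_perm n T x) \<in> cnm_leaves T" using cnm_perm_leaf[OF c x] .
    have ly: "(y, cnm_perm n T x) \<in> cnm_leaves T" using cnm_perm_leaf[OF c y] eq by simp
    have "x \<le> y" using cnm_leaf_lowest_in_column[OF c ly] lx unfolding cnm_leaves_def by blast
    moreover have "y \<le> x" using cnm_leaf_lowest_in_column[OF c lx] ly unfolding cnm_leaves_def by blast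
    ultimately show "x = y" by simp
  qed
  show "cnm_perm n T x \<in> {1..n}" if "x \<in> {1..n}" for x
    using cnm_perm_leaf[OF c that] is_cnmD(1)[OF c] unfolding cnm_leaves_def by auto
  show "\<And>i. i \<notin> {1..n} \<Longrightarrow> cnm_perm n T i = i" unfolding cnm_perm_def by auto
qed auto

lemma cnm_perm_unique_matching:
  assumes c: "is_cnm n T" and inj: "inj_on \<sigma> {1..n}"
    and match: "\<And>i. i \<in> {1..n} \<Longrightarrow> (i, \<sigma> i) \<in> T"
  shows "i \<in> {1..n} \<Longrightarrow> \<sigma> i = cnm_perm n T i"
proof (induction "n - i" arbitrary: i rule: less_induct)
  case less
  define C where "C = {k. (k, \<sigma> i) \<in> T}"
  define k where "k = Max C"
  have "finite C" "i \<in> C" using finite_cnm_column[OF c] match[OF less.prems] C_def by auto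
  then have "k \<in> C" "\<And>k'. k' \<in> C \<Longrightarrow> k' \<le> k" unfolding k_def using Max_in by auto
  then have kT: "(k, \<sigma> i) \<in> T" and lowest: "\<And>k'. (k', \<sigma> i) \<in> T \<Longrightarrow> k' \<le> k"
    unfolding C_def by auto
  have k: "k \<in> {1..n}" using kT is_cnmD(1)[OF c] by auto
  have "cnm_perm n T k = \<sigma> i"
    using cnm_perm_eqI[OF c cnm_lowest_in_column_is_leaf[OF c kT lowest]] .
  show ?case
  proof (cases "k = i")
    case True
    then show ?thesis using \<open>cnm_perm n T k = \<sigma> i\<close> by simp
  next
    case False
    with lowest[OF match[OF less.prems]] have "i < k" by simp
    then have "\<sigma> k = cnm_perm n T k" using less.hyps k less.prems by simp
    then have "\<sigma> k = \<sigma> i" using \<open>cnm_perm n T k = \<sigma> i\<close> by simp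
    then have "k = i" using inj_onD[OF inj _ k less.prems] by simp
    with False show ?thesis by simp
  qed
qed

lemma det_eq_single_term:
  fixes A :: "'a :: comm_ring_1 mat"
  assumes A: "A \<in> carrier_mat n n" and p0: "p0 permutes {0..<n}"
    and unique: "\<And>p. p permutes {0..<n} \<Longrightarrow> (\<And>i. i < n \<Longrightarrow> A $$ (i, p i) \<noteq> 0) \<Longrightarrow> p = p0"
  shows "det A = signof p0 * (\<Prod>i = 0..<n. A $$ (i, p0 i))"
proof -
  define f where "f p = signof p * (\<Prod>i = 0..<n. A $$ (i, p i))" for p
  define P where "P = {p. p permutes {0..<n}}"
  have "f p = 0" if "p \<in> P - {p0}" for p
  proof -
    have "\<exists>i<n. A $$ (i, p i) = 0" using unique that unfolding P_def by blast
    then obtain i where "i < n" "A $$ (i, p i) = 0" by blast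
    then have "(\<Prod>i = 0..<n. A $$ (i, p i)) = 0" by (intro prod_zero) auto
    then show ?thesis unfolding f_def by simp
  qed
  moreover have "finite P" "p0 \<in> P" unfolding P_def using p0 by (auto intro: finite_permutations)
  ultimately have "sum f P = f p0" using sum.mono_neutral_left[of P "{p0}" f] by simp
  then show ?thesis using det_def'[OF A] unfolding f_def P_def by simp
qed

text \<open>Matrix indices are 0-based while CNM indices are 1-based, so the Leibniz expansion
  sees the leaf permutation conjugated by \<open>i \<mapsto> i - 1\<close>.\<close>

definition cnm_perm0 :: "nat \<Rightarrow> (nat \<times> nat) set \<Rightarrow> nat \<Rightarrow> nat" where
  "cnm_perm0 n T = map_permutation {1..n} (\<lambda>x. x - 1) (cnm_perm n T)"

lemma bij_betw_pred_atLeastAtMost: "bij_betw (\<lambda>x. x - 1) {1..n} {0..<n::nat}"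
  by (rule bij_betw_byWitness[where f' = Suc]) auto

lemma cnm_perm0_permutes: "is_cnm n T \<Longrightarrow> cnm_perm0 n T permutes {0..<n}"
  unfolding cnm_perm0_def
  by (rule map_permutation_permutes[OF bij_betw_pred_atLeastAtMost cnm_perm_permutes])

lemma sign_cnm_perm0: "is_cnm n T \<Longrightarrow> sign (cnm_perm0 n T) = sign (cnm_perm n T)"
  unfolding cnm_perm0_def using bij_betw_pred_atLeastAtMost
  by (intro sign_map_permutation cnm_perm_permutes) (auto simp: bij_betw_def)

lemma cnm_perm0_apply: "i < n \<Longrightarrow> cnm_perm0 n T i = cnm_perm n T (Suc i) - 1"
  using map_permutation_apply[of "\<lambda>x. x - 1" "{1..n}" "Suc i"] bij_betw_pred_atLeastAtMost
  unfolding cnm_perm0_def bij_betw_def by auto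

lemma cnm_matrix_nonzero_iff:
  "i < n \<Longrightarrow> j < n \<Longrightarrow> cnm_matrix n T $$ (i, j) \<noteq> 0 \<longleftrightarrow> (Suc i, Suc j) \<in> T"
  unfolding cnm_matrix_def by simp

lemma cnm_matrix_leaf_entries:
  assumes c: "is_cnm n T" and i: "i < n"
  shows "cnm_matrix n T $$ (i, cnm_perm0 n T i) = 1"
proof -
  have "(Suc i, cnm_perm n T (Suc i)) \<in> T"
    using cnm_perm_leaf[OF c] i unfolding cnm_leaves_def by auto
  moreover have "cnm_perm n T (Suc i) \<in> {1..n}"
    using permutes_in_image[OF cnm_perm_permutes[OF c]] i by auto
  ultimately show ?thesis
    using cnm_perm0_apply[OF i] permutes_in_image[OF cnm_perm0_permutes[OF c]] i
    unfolding cnm_matrix_def by auto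
qed

lemma cnm_matrix_nonzero_term_unique:
  assumes c: "is_cnm n T" and p: "p permutes {0..<n}"
    and nonzero: "\<And>i. i < n \<Longrightarrow> cnm_matrix n T $$ (i, p i) \<noteq> 0"
  shows "p = cnm_perm0 n T"
proof
  fix i
  define \<sigma> where "\<sigma> x = Suc (p (x - 1))" for x
  have "inj_on \<sigma> {1..n}"
  proof (rule inj_onI)
    fix x y assume "x \<in> {1..n}" "y \<in> {1..n}" "\<sigma> x = \<sigma> y"
    then show "x = y" using injD[OF permutes_inj[OF p], of "x - 1" "y - 1"] by (auto simp: \<sigma>_def)
  qed
  moreover have "(x, \<sigma> x) \<in> T" if "x \<in> {1..n}" for x
    using nonzero[of "x - 1"] permutes_in_image[OF p, of "x - 1"] that
    by (auto simp: \<sigma>_def cnm_matrix_nonzero_iff)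
  ultimately have "\<sigma> (Suc i) = cnm_perm n T (Suc i)" if "i < n"
    using cnm_perm_unique_matching[OF c] that by auto
  then show "p i = cnm_perm0 n T i"
    using cnm_perm0_apply permutes_not_in[OF p] permutes_not_in[OF cnm_perm0_permutes[OF c]]
    by (cases "i < n") (auto simp: \<sigma>_def)
qed

theorem proposition2p1:
  fixes n :: nat and T :: "(nat \<times> nat) set"
  assumes "n \<ge> 1" and "is_cnm n T"
  shows "det (cnm_matrix n T) = sign (cnm_perm n T)"
proof -
  note c = assms(2)
  have M: "cnm_matrix n T \<in> carrier_mat n n" by (simp add: cnm_matrix_def)
  have "det (cnm_matrix n T)
      = signof (cnm_perm0 n T) * (\<Prod>i = 0..<n. cnm_matrix n T $$ (i, cnm_perm0 n T i))"
    by (rule det_eq_single_term[OF M cnm_perm0_permutes[OF c] cnm_matrix_nonzero_term_unique[OF c]])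
  also have "\<dots> = signof (cnm_perm0 n T)" using cnm_matrix_leaf_entries[OF c] by simp
  also have "\<dots> = sign (cnm_perm n T)" using sign_cnm_perm0[OF c] by simp
  finally show ?thesis .
qed

end
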